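(* Let $\mathcal G=(V,E,r)$ be a graph. The divisor class group of $\mathbf A(\mathcal G)$ is free abelian of rank $2|E|-|V|+\iota$, where $\iota$ is the number of isolated vertices of $\mathcal G$.
   Context: A graph $\mathcal G=(V,E,r)$ consists of a finite vertex set $V$, a finite edge set $E$ disjoint from $V$, and a map $r$ assigning to each edge a two-element subset of $V$; multiple edges allowed, no loops. An agglomeration on $\mathcal G$ is a function $a\colon V\cup E\to\mathbb N_0$ with $a(v)\ge a(e)$ whenever $v$ is incident with $e$; $\mathbf A(\mathcal G)$ is the monoid of agglomerations under pointwise addition; it is a Krull monoid. For a Krull monoid $H$ with divisor theory $\varphi\colon H\to D=\mathbb N_0^{(I)}$ (a divisor homomorphism, i.e. $\varphi(a)$ a summand of $\varphi(b)$ implies $a$ a summand of $b$, such that each standard basis vector is a pointwise minimum of finitely many elements of $\varphi(H)$), the divisor class group is $\mathbf q(D)/\mathbf q(\varphi(H))$, where $\mathbf q$ denotes the quotient group; it is independent of the choice of divisor theory. *)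

theory Defs
  imports "HOL-Algebra.Free_Abelian_Groups" "HOL-Library.Function_Algebras"
begin

text \<open>A graph (V,E,r): vertices of type 'v, edges of type 'e (so V and E are disjoint),
  r assigns to each edge a two-element subset of V. Multiple edges allowed, no loops.\<close>
definition is_graph :: "'v set \<Rightarrow> 'e set \<Rightarrow> ('e \<Rightarrow> 'v set) \<Rightarrow> bool" where
  "is_graph V E r \<longleftrightarrow> finite V \<and> finite E \<and> (\<forall>e\<in>E. r e \<subseteq> V \<and> card (r e) = 2)"

definition isolated_vertices :: "'v set \<Rightarrow> 'e set \<Rightarrow> ('e \<Rightarrow> 'v set) \<Rightarrow> 'v set" where
  "isolated_vertices V E r = {v \<in> V. \<forall>e\<in>E. v \<notin> r e}"

text \<open>Agglomerations: functions on V \<union> E (encoded on the sum type, zero outside V \<union> E)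
  with a(v) \<ge> a(e) whenever v is incident with e. The monoid operation is pointwise addition.\<close>
definition agglomerations :: "'v set \<Rightarrow> 'e set \<Rightarrow> ('e \<Rightarrow> 'v set) \<Rightarrow> ('v + 'e \<Rightarrow> nat) set" where
  "agglomerations V E r =
     {a. (\<forall>v. v \<notin> V \<longrightarrow> a (Inl v) = 0) \<and> (\<forall>e. e \<notin> E \<longrightarrow> a (Inr e) = 0) \<and>
         (\<forall>e\<in>E. \<forall>v\<in>r e. a (Inr e) \<le> a (Inl v))}"

text \<open>Divisor theory of a (commutative, additively written) submonoid H into the free
  monoid \<open>\<nat>\<^sub>0^(I)\<close> = finitely supported functions I \<Rightarrow> nat.\<close>
definition divisor_theory :: "'h::comm_monoid_add set \<Rightarrow> 'i set \<Rightarrow> ('h \<Rightarrow> ('i \<Rightarrow>\<^sub>0 nat)) \<Rightarrow> bool" where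
  "divisor_theory H I \<phi> \<longleftrightarrow>
     (\<forall>a\<in>H. Poly_Mapping.keys (\<phi> a) \<subseteq> I) \<and>
     \<phi> 0 = 0 \<and>
     (\<forall>a\<in>H. \<forall>b\<in>H. \<phi> (a + b) = \<phi> a + \<phi> b) \<and>
     (\<forall>a\<in>H. \<forall>b\<in>H. (\<exists>c. Poly_Mapping.keys c \<subseteq> I \<and> \<phi> b = \<phi> a + c) \<longrightarrow> (\<exists>c\<in>H. b = a + c)) \<and>
     (\<forall>i\<in>I. \<exists>S. finite S \<and> S \<noteq> {} \<and> S \<subseteq> \<phi> ` H \<and>
        (\<forall>j. Poly_Mapping.lookup (Poly_Mapping.single i 1) j = Min ((\<lambda>f. Poly_Mapping.lookup f j) ` S)))"

text \<open>Divisor class group q(D)/q(\<phi>(H)), where q(D) = \<open>\<int>^(I)\<close> is the free abelian group on I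
  and q(\<phi>(H)) is the subgroup generated by \<phi>(H).\<close>
definition divisor_class_group ::
  "'h set \<Rightarrow> 'i set \<Rightarrow> ('h \<Rightarrow> ('i \<Rightarrow>\<^sub>0 nat)) \<Rightarrow> ('i \<Rightarrow>\<^sub>0 int) set monoid" where
  "divisor_class_group H I \<phi> =
     free_Abelian_group I Mod
       generate (free_Abelian_group I) ((\<lambda>a. Poly_Mapping.map int (\<phi> a)) ` H)"

end

theory Submission
  imports Defs
begin

text \<open>
  \<open>\<A>(\<G>)\<close> is the monoid of lattice points of the rational cone in \<open>\<int>\<^bsup>V \<union> E\<^esup>\<close> cut out by
  the forms \<open>a(e) \<ge> 0\<close>, \<open>a(v) - a(e) \<ge> 0\<close> for \<open>v \<in> e\<close>, and \<open>a(v) \<ge> 0\<close> for isolated \<open>v\<close>.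
  Each of these \<open>3|E| + \<iota>\<close> forms takes the value 1 at a point where any other given one
  vanishes, so they are the primitive facet forms of the cone.  For such a monoid, recording
  the values of all facet forms is a divisor theory, and every divisor theory is this one up
  to relabelling the primes: a prime divisor vanishing on a point that is positive on all
  facets but one is proportional to that facet.  Hence the class group is the free Abelian
  group on the facets modulo the image of the map \<open>\<Phi>\<close> sending \<open>x \<in> \<int>\<^bsup>V \<union> E\<^esup>\<close> to its
  facet values.  The \<open>|E| + |V|\<close> facets given by all edges, all isolated vertices and one
  chosen incidence for each other vertex already determine \<open>x\<close>, so this image is the graph
  of a map from their coordinates to the others, and the quotient is free on the remaining
  \<open>2|E| - |V| + \<iota>\<close> incidences.
\<close>

section \<open>Quotients of free Abelian groups\<close>

lemma lookup_Abs_poly_mapping_on: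
  "finite I \<Longrightarrow> Poly_Mapping.lookup (Abs_poly_mapping (\<lambda>i. if i \<in> I then f i else 0)) =
     (\<lambda>i. if i \<in> I then f i else 0)"
  by (rule lookup_Abs_poly_mapping) (auto elim: finite_subset[rotated])

lemma lookup_map_int:
  "Poly_Mapping.lookup (Poly_Mapping.map int p) i = int (Poly_Mapping.lookup p i)"
  by (simp add: Poly_Mapping.map.rep_eq when_def)

definition restrict_poly_mapping :: "'a set \<Rightarrow> ('a \<Rightarrow>\<^sub>0 'b::zero) \<Rightarrow> 'a \<Rightarrow>\<^sub>0 'b" where
  "restrict_poly_mapping T p = Abs_poly_mapping (\<lambda>i. if i \<in> T then Poly_Mapping.lookup p i else 0)"

lemma lookup_restrict_poly_mapping:
  "Poly_Mapping.lookup (restrict_poly_mapping T p) i =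
    (if i \<in> T then Poly_Mapping.lookup p i else 0)"
proof -
  have "finite {i. (if i \<in> T then Poly_Mapping.lookup p i else 0) \<noteq> 0}"
    by (rule finite_subset[OF _ finite_keys]) (auto simp: in_keys_iff)
  then show ?thesis unfolding restrict_poly_mapping_def by (simp add: lookup_Abs_poly_mapping)
qed

lemma restrict_residual_zero_set_eq_image:
  fixes \<Phi> :: "'a \<Rightarrow> 'i \<Rightarrow>\<^sub>0 int" and \<rho> :: "('i \<Rightarrow>\<^sub>0 int) \<Rightarrow> 'a"
  assumes \<Phi>_keys: "\<And>x. Poly_Mapping.keys (\<Phi> x) \<subseteq> I"
    and \<rho>_in: "\<And>y. \<rho> y \<in> A"
    and \<rho>_\<Phi>: "\<And>x. x \<in> A \<Longrightarrow> \<rho> (\<Phi> x) = x"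
    and \<Phi>_\<rho>: "\<And>y i. i \<in> S \<Longrightarrow> Poly_Mapping.lookup (\<Phi> (\<rho> y)) i = Poly_Mapping.lookup y i"
  shows "{y. Poly_Mapping.keys y \<subseteq> I \<and> restrict_poly_mapping (I - S) (y - \<Phi> (\<rho> y)) = 0} = \<Phi> ` A"
proof (intro subset_antisym subsetI)
  fix y assume "y \<in> {y. Poly_Mapping.keys y \<subseteq> I \<and> restrict_poly_mapping (I - S) (y - \<Phi> (\<rho> y)) = 0}"
  then have y: "Poly_Mapping.keys y \<subseteq> I" "restrict_poly_mapping (I - S) (y - \<Phi> (\<rho> y)) = 0" by auto
  have "y = \<Phi> (\<rho> y)"
  proof (rule poly_mapping_eqI)
    fix i
    consider "i \<in> S" | "i \<in> I - S" | "i \<notin> I" by blast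
    then show "Poly_Mapping.lookup y i = Poly_Mapping.lookup (\<Phi> (\<rho> y)) i"
    proof cases
      case 1
      then show ?thesis by (simp add: \<Phi>_\<rho>)
    next
      case 2
      then show ?thesis using arg_cong[OF y(2), of "\<lambda>p. Poly_Mapping.lookup p i"]
        by (simp add: lookup_restrict_poly_mapping lookup_minus)
    next
      case 3
      then show ?thesis using y(1) \<Phi>_keys[of "\<rho> y"] by (metis in_keys_iff subsetD)
    qed
  qed
  then show "y \<in> \<Phi> ` A" using \<rho>_in by blast
next
  fix y assume "y \<in> \<Phi> ` A"
  then show "y \<in> {y. Poly_Mapping.keys y \<subseteq> I \<and> restrict_poly_mapping (I - S) (y - \<Phi> (\<rho> y)) = 0}"
    using \<Phi>_keys by (auto simp: \<rho>_\<Phi> lookup_restrict_poly_mapping intro!: poly_mapping_eqI)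
qed

lemma free_Abelian_group_Mod_image_iso:
  fixes \<Phi> :: "'a::ab_group_add \<Rightarrow> 'i \<Rightarrow>\<^sub>0 int" and \<rho> :: "('i \<Rightarrow>\<^sub>0 int) \<Rightarrow> 'a"
  assumes \<Phi>_add: "\<And>x x'. \<Phi> (x + x') = \<Phi> x + \<Phi> x'"
    and \<Phi>_keys: "\<And>x. Poly_Mapping.keys (\<Phi> x) \<subseteq> I"
    and \<rho>_add: "\<And>y y'. \<rho> (y + y') = \<rho> y + \<rho> y'"
    and \<rho>_in: "\<And>y. \<rho> y \<in> A"
    and \<rho>_\<Phi>: "\<And>x. x \<in> A \<Longrightarrow> \<rho> (\<Phi> x) = x"
    and \<Phi>_\<rho>: "\<And>y i. i \<in> S \<Longrightarrow> Poly_Mapping.lookup (\<Phi> (\<rho> y)) i = Poly_Mapping.lookup y i"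
    and \<rho>_local: "\<And>y. (\<And>i. i \<in> S \<Longrightarrow> Poly_Mapping.lookup y i = 0) \<Longrightarrow> \<rho> y = 0"
  shows "free_Abelian_group I Mod (\<Phi> ` A) \<cong> free_Abelian_group (I - S)"
proof -
  let ?G = "free_Abelian_group I" and ?Q = "free_Abelian_group (I - S)"
  define \<psi> where "\<psi> y = restrict_poly_mapping (I - S) (y - \<Phi> (\<rho> y))" for y
  have "Poly_Mapping.keys (\<psi> y) \<subseteq> I - S" for y
    by (auto simp: \<psi>_def in_keys_iff lookup_restrict_poly_mapping split: if_splits)
  then have "\<psi> \<in> hom ?G ?Q"
    by (intro homI) (auto intro!: poly_mapping_eqI
        simp: \<psi>_def lookup_restrict_poly_mapping lookup_add lookup_minus \<rho>_add \<Phi>_add)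
  then interpret \<psi>: group_hom ?G ?Q \<psi>
    by (simp add: group_hom_def group_hom_axioms_def)
  have "carrier ?Q \<subseteq> \<psi> ` carrier ?G"
  proof
    fix w assume w: "w \<in> carrier ?Q"
    have "\<rho> w = 0" using w by (intro \<rho>_local) (auto simp: in_keys_iff)
    moreover have "\<Phi> 0 = 0" using \<Phi>_add[of 0 0] by simp
    ultimately have "w = \<psi> w"
      using w by (intro poly_mapping_eqI)
        (auto simp: \<psi>_def lookup_restrict_poly_mapping in_keys_iff)
    moreover have "w \<in> carrier ?G" using w by auto
    ultimately show "w \<in> \<psi> ` carrier ?G" by (rule image_eqI)
  qed
  then have "\<psi> ` carrier ?G = carrier ?Q"
    using \<psi>.hom_closed by blast
  then have "?G Mod kernel ?G ?Q \<psi> \<cong> ?Q" by (rule \<psi>.FactGroup_iso)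
  moreover have "kernel ?G ?Q \<psi> = \<Phi> ` A"
    using restrict_residual_zero_set_eq_image[OF \<Phi>_keys \<rho>_in \<rho>_\<Phi> \<Phi>_\<rho>]
    by (simp add: kernel_def \<psi>_def)
  ultimately show ?thesis by simp
qed

section \<open>Monoids of lattice points in a cone\<close>

locale polyhedral_monoid =
  fixes X :: "'x set" and K :: "'k set" and form :: "'k \<Rightarrow> ('x \<Rightarrow> int) \<Rightarrow> int"
    and H :: "('x \<Rightarrow> nat) set"
  assumes finite_K: "finite K"
    and form_add: "form k (\<lambda>z. x z + y z) = form k x + form k y"
    and H_eq: "H = {a. (\<forall>z. z \<notin> X \<longrightarrow> a z = 0) \<and> (\<forall>k\<in>K. form k (\<lambda>z. int (a z)) \<ge> 0)}"
    and nonneg_if_forms_nonneg: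
      "(\<forall>z. z \<notin> X \<longrightarrow> x z = 0) \<Longrightarrow> (\<forall>k\<in>K. form k x \<ge> 0) \<Longrightarrow> x z \<ge> 0"
    and facet_witness: "k \<in> K \<Longrightarrow> k' \<in> K \<Longrightarrow>
      \<exists>s\<in>H. form k (\<lambda>z. int (s z)) = 1 \<and> (k' \<noteq> k \<longrightarrow> form k' (\<lambda>z. int (s z)) = 0)"
begin

definition lattice :: "('x \<Rightarrow> int) set" where
  "lattice = {x. \<forall>z. z \<notin> X \<longrightarrow> x z = 0}"

definition val :: "'k \<Rightarrow> ('x \<Rightarrow> nat) \<Rightarrow> int" where
  "val k a = form k (\<lambda>z. int (a z))"

lemma form_zero: "form k (\<lambda>z. 0) = 0"
  using form_add[of k "\<lambda>z. 0" "\<lambda>z. 0"] by simp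

lemma form_diff: "form k (\<lambda>z. x z - y z) = form k x - form k y"
  using form_add[of k "\<lambda>z. x z - y z" y] by simp

lemma form_uminus: "form k (\<lambda>z. - x z) = - form k x"
  using form_diff[of k "\<lambda>z. 0" x] by (simp add: form_zero)

lemma form_sum: "form k (\<lambda>z. \<Sum>j\<in>A. g j z) = (\<Sum>j\<in>A. form k (g j))"
  by (induction A rule: infinite_finite_induct) (simp_all add: form_zero form_add)

lemma form_mult: "form k (\<lambda>z. int n * x z) = int n * form k x"
proof (induction n)
  case 0
  then show ?case by (simp add: form_zero)
next
  case (Suc n)
  have "form k (\<lambda>z. x z + int n * x z) = form k x + int n * form k x"
    using Suc by (simp add: form_add)
  then show ?case by (simp add: algebra_simps)
qed

lemma val_add: "val k (a + b) = val k a + val k b"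
  unfolding val_def by (simp add: form_add)

lemma val_mult: "val k (\<lambda>z. n * a z) = int n * val k a"
  unfolding val_def by (simp add: form_mult)

lemma val_sum: "val k (\<lambda>z. \<Sum>j\<in>A. g j z) = (\<Sum>j\<in>A. val k (g j))"
  unfolding val_def by (simp add: form_sum)

lemma H_iff: "a \<in> H \<longleftrightarrow> (\<forall>z. z \<notin> X \<longrightarrow> a z = 0) \<and> (\<forall>k\<in>K. val k a \<ge> 0)"
  unfolding H_eq val_def by auto

lemma H_vanishes: "a \<in> H \<Longrightarrow> z \<notin> X \<Longrightarrow> a z = 0"
  by (simp add: H_iff)

lemma val_nonneg: "a \<in> H \<Longrightarrow> k \<in> K \<Longrightarrow> val k a \<ge> 0"
  by (simp add: H_iff)

lemma H_mult: "a \<in> H \<Longrightarrow> (\<lambda>z. n * a z) \<in> H"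
  by (simp add: H_iff val_mult)

lemma H_sum: "(\<And>j. j \<in> A \<Longrightarrow> g j \<in> H) \<Longrightarrow> (\<lambda>z. \<Sum>j\<in>A. g j z) \<in> H"
  by (simp add: H_iff val_sum sum_nonneg)

lemma lattice_point_in_H:
  assumes "x \<in> lattice" "\<And>k. k \<in> K \<Longrightarrow> form k x \<ge> 0"
  shows "\<exists>a\<in>H. \<forall>z. int (a z) = x z"
proof -
  have "x z \<ge> 0" for z
    using assms nonneg_if_forms_nonneg unfolding lattice_def by blast
  then have x_eq: "(\<lambda>z. int (nat (x z))) = x" by (simp add: fun_eq_iff)
  have "(\<lambda>z. nat (x z)) \<in> H"
    using assms unfolding H_iff val_def x_eq lattice_def by auto
  with x_eq show ?thesis by (metis (no_types))
qed

lemma le_sum_nat: "k \<in> K \<Longrightarrow> f k \<le> int (\<Sum>j\<in>K. nat (f j))"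
proof -
  assume "k \<in> K"
  then have "nat (f k) \<le> (\<Sum>j\<in>K. nat (f j))"
    using finite_K by (intro member_le_sum) auto
  then show ?thesis by linarith
qed

lemma val_sum_ge:
  assumes "finite A" "k \<in> A" "k' \<in> K" "\<And>j. j \<in> A \<Longrightarrow> g j \<in> H"
  shows "val k' (\<lambda>z. \<Sum>j\<in>A. g j z) \<ge> val k' (g k)"
proof -
  have "val k' (\<lambda>z. \<Sum>j\<in>A. g j z) = val k' (g k) + (\<Sum>j\<in>A - {k}. val k' (g j))"
    unfolding val_sum using assms by (simp add: sum.remove)
  also have "\<dots> \<ge> val k' (g k)"
    using assms by (auto intro!: sum_nonneg val_nonneg)
  finally show ?thesis .
qed

definition witness :: "'k \<Rightarrow> 'k \<Rightarrow> 'x \<Rightarrow> nat" where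
  "witness k k' = (SOME s. s \<in> H \<and> val k s = 1 \<and> (k' \<noteq> k \<longrightarrow> val k' s = 0))"

lemma witness:
  assumes "k \<in> K" "k' \<in> K"
  shows "witness k k' \<in> H" "val k (witness k k') = 1" "k' \<noteq> k \<Longrightarrow> val k' (witness k k') = 0"
proof -
  have "\<exists>s. s \<in> H \<and> val k s = 1 \<and> (k' \<noteq> k \<longrightarrow> val k' s = 0)"
    using facet_witness[OF assms] unfolding val_def by blast
  from someI_ex[OF this]
  show "witness k k' \<in> H" "val k (witness k k') = 1" "k' \<noteq> k \<Longrightarrow> val k' (witness k k') = 0"
    unfolding witness_def by auto
qed

definition avoiding :: "'k \<Rightarrow> 'x \<Rightarrow> nat" where
  "avoiding k = (\<lambda>z. \<Sum>k'\<in>K - {k}. witness k' k z)"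

lemma avoiding:
  assumes "k \<in> K"
  shows "avoiding k \<in> H" "val k (avoiding k) = 0"
    "\<And>k'. k' \<in> K \<Longrightarrow> k' \<noteq> k \<Longrightarrow> val k' (avoiding k) \<ge> 1"
proof -
  show "avoiding k \<in> H"
    unfolding avoiding_def using assms by (intro H_sum) (auto intro: witness)
  show "val k (avoiding k) = 0"
    unfolding avoiding_def val_sum using assms by (intro sum.neutral) (auto intro: witness(3))
  fix k' assume "k' \<in> K" "k' \<noteq> k"
  then show "val k' (avoiding k) \<ge> 1"
    using val_sum_ge[of "K - {k}" k' k' "\<lambda>j. witness j k"] assms finite_K
    unfolding avoiding_def by (auto simp: witness)
qed

definition interior :: "'x \<Rightarrow> nat" where
  "interior = (\<lambda>z. \<Sum>k\<in>K. witness k k z)"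

lemma interior: "interior \<in> H" "\<And>k. k \<in> K \<Longrightarrow> val k interior \<ge> 1"
proof -
  show "interior \<in> H"
    unfolding interior_def by (intro H_sum) (auto intro: witness)
  fix k assume "k \<in> K"
  then show "val k interior \<ge> 1"
    using val_sum_ge[of K k k "\<lambda>j. witness j j"] finite_K
    unfolding interior_def by (auto simp: witness)
qed

lemma dominated_by_multiple:
  assumes y: "y \<in> H" and a: "a \<in> H" and dom: "\<And>k. k \<in> K \<Longrightarrow> val k a > 0 \<Longrightarrow> val k y \<ge> 1"
  shows "\<exists>M. \<exists>w\<in>H. a + w = (\<lambda>z. M * y z)"
proof -
  define M where "M = (\<Sum>k\<in>K. nat (val k a))"
  define x where "x = (\<lambda>z. int M * int (y z) - int (a z))"
  have "x \<in> lattice"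
    using a y by (simp add: x_def lattice_def H_vanishes)
  moreover have "form k x \<ge> 0" if k: "k \<in> K" for k
  proof -
    have "form k x = int M * val k y - val k a"
      by (simp add: x_def val_def form_diff form_mult)
    moreover have "val k a \<le> int M"
      using le_sum_nat[OF k] by (simp add: M_def)
    moreover have "val k a \<le> int M * val k y"
    proof (cases "val k a > 0")
      case True
      then have "int M \<le> int M * val k y"
        using dom[OF k] mult_left_mono[of 1 "val k y" "int M"] by simp
      then show ?thesis using \<open>val k a \<le> int M\<close> by linarith
    next
      case False
      moreover have "0 \<le> int M * val k y" using val_nonneg[OF y k] by simp
      ultimately show ?thesis by linarith
    qed
    ultimately show ?thesis by simp
  qed
  ultimately obtain w where w: "w \<in> H" "\<And>z. int (w z) = x z"
    using lattice_point_in_H by blast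
  have "int (a z + w z) = int (M * y z)" for z
    using w(2) by (simp add: x_def)
  then have "a + w = (\<lambda>z. M * y z)"
    by (simp only: of_nat_eq_iff fun_eq_iff plus_fun_apply) simp
  with w(1) show ?thesis by blast
qed

lemma split_off_facet:
  assumes k: "k \<in> K" and a: "a \<in> H"
  shows "\<exists>N. \<exists>w\<in>H. val k w = 0 \<and>
    a + (\<lambda>z. N * avoiding k z) = (\<lambda>z. nat (val k a) * witness k k z) + w"
proof -
  define p where "p = witness k k"
  define y where "y = avoiding k"
  have p: "p \<in> H" "val k p = 1" using witness[OF k k] by (auto simp: p_def)
  have y: "y \<in> H" "val k y = 0" "\<And>k'. k' \<in> K \<Longrightarrow> k' \<noteq> k \<Longrightarrow> val k' y \<ge> 1"
    using avoiding[OF k] by (auto simp: y_def)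
  define m where "m = nat (val k a)"
  have val_a: "val k a = int m" using val_nonneg[OF a k] by (simp add: m_def)
  define N where "N = (\<Sum>k'\<in>K. nat (int m * val k' p))"
  define x where "x = (\<lambda>z. int (a z) + int N * int (y z) - int m * int (p z))"
  have form_x: "form k' x = val k' a + int N * val k' y - int m * val k' p" for k'
    by (simp add: x_def val_def form_diff form_add form_mult)
  have "x \<in> lattice" using a y(1) p(1) by (simp add: x_def lattice_def H_vanishes)
  moreover have "form k' x \<ge> 0" if k': "k' \<in> K" for k'
  proof (cases "k' = k")
    case True
    then show ?thesis using form_x val_a y(2) p(2) by simp
  next
    case False
    have "int m * val k' p \<le> int N"
      using le_sum_nat[OF k', of "\<lambda>k'. int m * val k' p"] by (simp add: N_def)
    also have "\<dots> \<le> int N * val k' y"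
      using y(3)[OF k' False] mult_left_mono[of 1 "val k' y" "int N"] by simp
    finally show ?thesis using form_x val_nonneg[OF a k'] by simp
  qed
  ultimately obtain w where w: "w \<in> H" "\<And>z. int (w z) = x z"
    using lattice_point_in_H by blast
  have "val k w = 0" using w(2) form_x val_a y(2) p(2) by (simp add: val_def)
  have "int (a z + N * y z) = int (m * p z + w z)" for z
    using w(2) by (simp add: x_def)
  then have "a + (\<lambda>z. N * y z) = (\<lambda>z. m * p z) + w"
    by (simp only: of_nat_eq_iff fun_eq_iff plus_fun_apply) simp
  with w(1) \<open>val k w = 0\<close> show ?thesis by (auto simp: m_def p_def y_def)
qed

lemma lattice_point_eq_diff:
  assumes "x \<in> lattice"
  shows "\<exists>a\<in>H. \<exists>b\<in>H. \<forall>z. x z = int (a z) - int (b z)"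
proof -
  define M where "M = (\<Sum>k\<in>K. nat \<bar>form k x\<bar>)"
  define b where "b = (\<lambda>z. M * interior z)"
  have b: "b \<in> H" unfolding b_def by (intro H_mult interior)
  have "(\<lambda>z. x z + int (b z)) \<in> lattice"
    using assms b by (simp add: lattice_def H_vanishes)
  moreover have "form k (\<lambda>z. x z + int (b z)) \<ge> 0" if k: "k \<in> K" for k
  proof -
    have "form k (\<lambda>z. x z + int (b z)) = form k x + int M * val k interior"
      by (simp add: b_def val_def form_add form_mult)
    moreover have "\<bar>form k x\<bar> \<le> int M"
      using le_sum_nat[OF k, of "\<lambda>k. \<bar>form k x\<bar>"] by (simp add: M_def)
    moreover have "int M \<le> int M * val k interior"
      using interior(2)[OF k] mult_left_mono[of 1 "val k interior" "int M"] by simp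
    ultimately show ?thesis by linarith
  qed
  ultimately obtain a where a: "a \<in> H" "\<And>z. int (a z) = x z + int (b z)"
    using lattice_point_in_H by blast
  then have "\<forall>z. x z = int (a z) - int (b z)" by simp
  with a(1) b show ?thesis by blast
qed

definition facet_divisor :: "'i set \<Rightarrow> ('i \<Rightarrow> 'k) \<Rightarrow> ('x \<Rightarrow> nat) \<Rightarrow> 'i \<Rightarrow>\<^sub>0 nat" where
  "facet_divisor I \<sigma> a = Abs_poly_mapping (\<lambda>i. if i \<in> I then nat (val (\<sigma> i) a) else 0)"

lemma lookup_facet_divisor:
  "finite I \<Longrightarrow>
    Poly_Mapping.lookup (facet_divisor I \<sigma> a) i = (if i \<in> I then nat (val (\<sigma> i) a) else 0)"
  unfolding facet_divisor_def by (simp add: lookup_Abs_poly_mapping_on)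

lemma facet_divisor_add:
  assumes "finite I" "\<sigma> ` I \<subseteq> K" "a \<in> H" "b \<in> H"
  shows "facet_divisor I \<sigma> (a + b) = facet_divisor I \<sigma> a + facet_divisor I \<sigma> b"
proof (rule poly_mapping_eqI)
  fix i
  have "i \<in> I \<Longrightarrow> nat (val (\<sigma> i) a + val (\<sigma> i) b) = nat (val (\<sigma> i) a) + nat (val (\<sigma> i) b)"
    using assms by (intro nat_add_distrib) (auto intro: val_nonneg)
  then show "Poly_Mapping.lookup (facet_divisor I \<sigma> (a + b)) i =
      Poly_Mapping.lookup (facet_divisor I \<sigma> a + facet_divisor I \<sigma> b) i"
    using assms by (simp add: lookup_facet_divisor lookup_add val_add)
qed

lemma facet_divisor_dvd_imp_dvd:
  assumes \<sigma>: "bij_betw \<sigma> I K" and a: "a \<in> H" and b: "b \<in> H"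
    and c: "facet_divisor I \<sigma> b = facet_divisor I \<sigma> a + c"
  shows "\<exists>w\<in>H. b = a + w"
proof -
  have finI: "finite I" using \<sigma> finite_K bij_betw_finite by blast
  define x where "x = (\<lambda>z. int (b z) - int (a z))"
  have "x \<in> lattice" using a b by (simp add: x_def lattice_def H_vanishes)
  moreover have "form k x \<ge> 0" if k: "k \<in> K" for k
  proof -
    obtain i where i: "i \<in> I" "\<sigma> i = k" using \<sigma> k by (auto simp: bij_betw_def)
    have "Poly_Mapping.lookup (facet_divisor I \<sigma> b) i =
        Poly_Mapping.lookup (facet_divisor I \<sigma> a + c) i"
      by (simp only: c)
    then have "nat (val k a) \<le> nat (val k b)"
      using finI i by (simp add: lookup_facet_divisor lookup_add)
    then show ?thesis
      using val_nonneg[OF a k] val_nonneg[OF b k] by (simp add: x_def val_def form_diff)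
  qed
  ultimately obtain w where w: "w \<in> H" "\<And>z. int (w z) = x z"
    using lattice_point_in_H by blast
  have "int (b z) = int (a z + w z)" for z
    using w(2) by (simp add: x_def)
  then have "b = a + w"
    by (simp only: of_nat_eq_iff fun_eq_iff plus_fun_apply) simp
  with w(1) show ?thesis by blast
qed

lemma single_eq_Min_facet_divisor:
  assumes \<sigma>: "bij_betw \<sigma> I K" and i: "i \<in> I"
  defines "S \<equiv> facet_divisor I \<sigma> ` witness (\<sigma> i) ` K"
  shows "Poly_Mapping.lookup (Poly_Mapping.single i 1) j = Min ((\<lambda>f. Poly_Mapping.lookup f j) ` S)"
proof -
  have finI: "finite I" using \<sigma> finite_K bij_betw_finite by blast
  have k: "\<sigma> i \<in> K" using \<sigma> i by (auto simp: bij_betw_def)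
  have img: "(\<lambda>f. Poly_Mapping.lookup f j) ` S =
      (\<lambda>k'. if j \<in> I then nat (val (\<sigma> j) (witness (\<sigma> i) k')) else 0) ` K"
    unfolding S_def image_image using finI by (simp add: lookup_facet_divisor)
  consider "j \<notin> I" | "j = i" | "j \<in> I" "j \<noteq> i" using i by blast
  then show ?thesis
  proof cases
    case 1
    then have "(\<lambda>f. Poly_Mapping.lookup f j) ` S = {0}" using k by (auto simp: img)
    moreover have "j \<noteq> i" using 1 i by blast
    ultimately show ?thesis by (simp add: lookup_single)
  next
    case 2
    then have "(\<lambda>f. Poly_Mapping.lookup f j) ` S = {1}"
      unfolding img using 2 i k by (auto simp: witness(2))
    then show ?thesis using 2 by simp
  next
    case 3
    then have "\<sigma> j \<in> K" "\<sigma> j \<noteq> \<sigma> i" using \<sigma> i by (auto simp: bij_betw_def inj_on_def)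
    then have "0 \<in> (\<lambda>f. Poly_Mapping.lookup f j) ` S"
      unfolding img using 3 k by (auto simp: witness(3) intro!: image_eqI[of _ _ "\<sigma> j"])
    then have "Min ((\<lambda>f. Poly_Mapping.lookup f j) ` S) = 0"
      using finite_K by (intro Min_eqI) (auto simp: img)
    then show ?thesis using 3 by (simp add: lookup_single)
  qed
qed

lemma divisor_theory_facet_divisor:
  assumes \<sigma>: "bij_betw \<sigma> I K"
  shows "divisor_theory H I (facet_divisor I \<sigma>)"
  unfolding divisor_theory_def
proof (intro conjI ballI impI)
  have finI: "finite I" using \<sigma> finite_K bij_betw_finite by blast
  show "Poly_Mapping.keys (facet_divisor I \<sigma> a) \<subseteq> I" for a
    using finI by (simp add: in_keys_iff lookup_facet_divisor subset_iff)
  show "facet_divisor I \<sigma> 0 = 0"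
    using finI by (intro poly_mapping_eqI) (simp add: lookup_facet_divisor val_def form_zero)
  show "facet_divisor I \<sigma> (a + b) = facet_divisor I \<sigma> a + facet_divisor I \<sigma> b"
    if "a \<in> H" "b \<in> H" for a b
    using finI \<sigma> that by (intro facet_divisor_add) (auto simp: bij_betw_def)
  show "\<exists>w\<in>H. b = a + w"
    if "a \<in> H" "b \<in> H" "\<exists>c. Poly_Mapping.keys c \<subseteq> I \<and> facet_divisor I \<sigma> b = facet_divisor I \<sigma> a + c"
    for a b
    using that facet_divisor_dvd_imp_dvd[OF \<sigma>] by blast
  fix i assume i: "i \<in> I"
  define S where "S = facet_divisor I \<sigma> ` witness (\<sigma> i) ` K"
  have "witness (\<sigma> i) ` K \<subseteq> H"
    using \<sigma> i by (auto simp: bij_betw_def intro: witness(1))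
  then have "S \<subseteq> facet_divisor I \<sigma> ` H" unfolding S_def by (rule image_mono)
  moreover have "finite S" "S \<noteq> {}"
    using finite_K \<sigma> i by (auto simp: S_def bij_betw_def)
  moreover note single_eq_Min_facet_divisor[OF \<sigma> i, folded S_def]
  ultimately show "\<exists>S. finite S \<and> S \<noteq> {} \<and> S \<subseteq> facet_divisor I \<sigma> ` H \<and>
      (\<forall>j. Poly_Mapping.lookup (Poly_Mapping.single i 1) j =
        Min ((\<lambda>f. Poly_Mapping.lookup f j) ` S))"
    by blast
qed

lemma val_determines_facet:
  assumes "k \<in> K" "k' \<in> K" "\<And>a. a \<in> H \<Longrightarrow> nat (val k a) = nat (val k' a)"
  shows "k = k'"
proof (rule ccontr)
  assume "k \<noteq> k'"
  then have "val k (avoiding k) = 0" "val k' (avoiding k) \<ge> 1"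
    using avoiding assms(1,2) by auto
  with assms(3)[OF avoiding(1)[OF assms(1)]] show False by simp
qed

definition facet_map :: "'i set \<Rightarrow> ('i \<Rightarrow> 'k) \<Rightarrow> ('x \<Rightarrow> int) \<Rightarrow> 'i \<Rightarrow>\<^sub>0 int" where
  "facet_map I \<sigma> x = Abs_poly_mapping (\<lambda>i. if i \<in> I then form (\<sigma> i) x else 0)"

lemma lookup_facet_map:
  "finite I \<Longrightarrow> Poly_Mapping.lookup (facet_map I \<sigma> x) i = (if i \<in> I then form (\<sigma> i) x else 0)"
  unfolding facet_map_def by (simp add: lookup_Abs_poly_mapping_on)

lemma facet_map_add:
  "finite I \<Longrightarrow> facet_map I \<sigma> (\<lambda>z. x z + y z) = facet_map I \<sigma> x + facet_map I \<sigma> y"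
  by (intro poly_mapping_eqI) (simp add: lookup_facet_map lookup_add form_add)

lemma facet_map_diff:
  "finite I \<Longrightarrow> facet_map I \<sigma> (\<lambda>z. x z - y z) = facet_map I \<sigma> x - facet_map I \<sigma> y"
  by (intro poly_mapping_eqI) (simp add: lookup_facet_map lookup_minus form_diff)

lemma facet_map_uminus: "finite I \<Longrightarrow> facet_map I \<sigma> (\<lambda>z. - x z) = - facet_map I \<sigma> x"
  by (intro poly_mapping_eqI) (simp add: lookup_facet_map form_uminus)

lemma facet_map_keys: "finite I \<Longrightarrow> Poly_Mapping.keys (facet_map I \<sigma> x) \<subseteq> I"
  by (simp add: in_keys_iff lookup_facet_map subset_iff)

lemma map_int_facet_divisor:
  assumes "finite I" "\<sigma> ` I \<subseteq> K" "a \<in> H"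
  shows "Poly_Mapping.map int (facet_divisor I \<sigma> a) = facet_map I \<sigma> (\<lambda>z. int (a z))"
  using assms val_nonneg[OF assms(3)]
  by (intro poly_mapping_eqI)
    (auto simp: lookup_map_int lookup_facet_divisor lookup_facet_map val_def)

lemma subgroup_facet_map_lattice:
  assumes "finite I"
  shows "subgroup (facet_map I \<sigma> ` lattice) (free_Abelian_group I)"
proof (rule group.subgroupI[OF group_free_Abelian_group])
  show "facet_map I \<sigma> ` lattice \<subseteq> carrier (free_Abelian_group I)"
    using facet_map_keys[OF assms] by auto
  have "(\<lambda>z. 0) \<in> lattice" by (simp add: lattice_def)
  then show "facet_map I \<sigma> ` lattice \<noteq> {}" by blast
next
  fix h assume "h \<in> facet_map I \<sigma> ` lattice"
  then obtain x where x: "x \<in> lattice" "h = facet_map I \<sigma> x" by blast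
  then have "inv\<^bsub>free_Abelian_group I\<^esub> h = facet_map I \<sigma> (\<lambda>z. - x z)"
    using assms by (simp add: facet_map_keys facet_map_uminus)
  moreover have "(\<lambda>z. - x z) \<in> lattice" using x(1) by (simp add: lattice_def)
  ultimately show "inv\<^bsub>free_Abelian_group I\<^esub> h \<in> facet_map I \<sigma> ` lattice" by blast
next
  fix h h' assume "h \<in> facet_map I \<sigma> ` lattice" "h' \<in> facet_map I \<sigma> ` lattice"
  then obtain x x' where "x \<in> lattice" "x' \<in> lattice" "h = facet_map I \<sigma> x" "h' = facet_map I \<sigma> x'"
    by blast
  moreover have "(\<lambda>z. x z + x' z) \<in> lattice" using calculation by (simp add: lattice_def)
  ultimately show "h \<otimes>\<^bsub>free_Abelian_group I\<^esub> h' \<in> facet_map I \<sigma> ` lattice"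
    using assms by (force simp: facet_map_add)
qed

lemma generate_facet_divisor:
  assumes \<sigma>: "bij_betw \<sigma> I K"
  shows "generate (free_Abelian_group I) ((\<lambda>a. Poly_Mapping.map int (facet_divisor I \<sigma> a)) ` H) =
    facet_map I \<sigma> ` lattice"
    (is "generate ?G ?gens = _")
proof -
  have finI: "finite I" using \<sigma> finite_K bij_betw_finite by blast
  have gens: "?gens = (\<lambda>a. facet_map I \<sigma> (\<lambda>z. int (a z))) ` H"
    using finI \<sigma> by (auto simp: bij_betw_def map_int_facet_divisor intro!: image_cong)
  show ?thesis
  proof
    have "?gens \<subseteq> facet_map I \<sigma> ` lattice"
      unfolding gens by (auto simp: lattice_def H_vanishes)
    then show "generate ?G ?gens \<subseteq> facet_map I \<sigma> ` lattice"
      using finI by (intro group.generate_subgroup_incl subgroup_facet_map_lattice) simp_all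
    show "facet_map I \<sigma> ` lattice \<subseteq> generate ?G ?gens"
    proof
      fix y assume "y \<in> facet_map I \<sigma> ` lattice"
      then obtain x where "x \<in> lattice" "y = facet_map I \<sigma> x" by blast
      moreover obtain a b where ab: "a \<in> H" "b \<in> H" "\<And>z. x z = int (a z) - int (b z)"
        using lattice_point_eq_diff[OF \<open>x \<in> lattice\<close>] by blast
      moreover have "x = (\<lambda>z. int (a z) - int (b z))" using ab(3) by (simp add: fun_eq_iff)
      ultimately have y_eq: "y = facet_map I \<sigma> (\<lambda>z. int (a z)) \<otimes>\<^bsub>?G\<^esub>
          inv\<^bsub>?G\<^esub> facet_map I \<sigma> (\<lambda>z. int (b z))"
        using finI by (simp add: facet_map_diff facet_map_keys)
      have "facet_map I \<sigma> (\<lambda>z. int (a z)) \<in> ?gens" "facet_map I \<sigma> (\<lambda>z. int (b z)) \<in> ?gens"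
        using gens ab by auto
      then show "y \<in> generate ?G ?gens"
        unfolding y_eq by (intro generate.eng generate.incl generate.inv)
    qed
  qed
qed

end

section \<open>Uniqueness of the divisor theory\<close>

locale polyhedral_divisor_theory = polyhedral_monoid X K form H
  for X :: "'x set" and K :: "'k set" and form :: "'k \<Rightarrow> ('x \<Rightarrow> int) \<Rightarrow> int"
    and H :: "('x \<Rightarrow> nat) set" +
  fixes I :: "'i set" and \<phi> :: "('x \<Rightarrow> nat) \<Rightarrow> 'i \<Rightarrow>\<^sub>0 nat"
  assumes divisor_theory: "divisor_theory H I \<phi>"
begin

definition coeff :: "'i \<Rightarrow> ('x \<Rightarrow> nat) \<Rightarrow> nat" where
  "coeff i a = Poly_Mapping.lookup (\<phi> a) i"

lemma coeff_outside:
  assumes "a \<in> H" "i \<notin> I"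
  shows "coeff i a = 0"
proof -
  have "Poly_Mapping.keys (\<phi> a) \<subseteq> I"
    using divisor_theory assms(1) unfolding divisor_theory_def by blast
  with assms(2) show ?thesis by (auto simp: coeff_def in_keys_iff)
qed

lemma coeff_zero: "coeff i (\<lambda>z. 0) = 0"
  using divisor_theory by (simp add: divisor_theory_def coeff_def flip: zero_fun_def)

lemma coeff_add: "a \<in> H \<Longrightarrow> b \<in> H \<Longrightarrow> coeff i (a + b) = coeff i a + coeff i b"
  using divisor_theory unfolding divisor_theory_def coeff_def by (simp add: lookup_add)

lemma coeff_mult:
  assumes "a \<in> H"
  shows "coeff i (\<lambda>z. n * a z) = n * coeff i a"
proof (induction n)
  case 0
  then show ?case by (simp add: coeff_zero)
next
  case (Suc n)
  have "(\<lambda>z. Suc n * a z) = a + (\<lambda>z. n * a z)" by (simp add: fun_eq_iff)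
  then show ?case using Suc assms by (simp add: coeff_add H_mult)
qed

lemma coeff_sum:
  "(\<And>j. j \<in> A \<Longrightarrow> g j \<in> H) \<Longrightarrow> coeff i (\<lambda>z. \<Sum>j\<in>A. g j z) = (\<Sum>j\<in>A. coeff i (g j))"
proof (induction A rule: infinite_finite_induct)
  case (infinite A)
  then show ?case by (simp add: coeff_zero)
next
  case empty
  then show ?case by (simp add: coeff_zero)
next
  case (insert j A)
  have "(\<lambda>z. \<Sum>j\<in>insert j A. g j z) = g j + (\<lambda>z. \<Sum>j\<in>A. g j z)"
    using insert by (simp add: fun_eq_iff)
  then show ?case using insert by (simp add: coeff_add H_sum)
qed

lemma coeff_dvd_imp_dvd:
  assumes "a \<in> H" "b \<in> H" "\<And>i. i \<in> I \<Longrightarrow> coeff i a \<le> coeff i b"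
  shows "\<exists>c\<in>H. b = a + c"
proof -
  define c where "c = \<phi> b - \<phi> a"
  have "Poly_Mapping.keys c \<subseteq> I"
  proof
    fix i assume "i \<in> Poly_Mapping.keys c"
    then have "coeff i b \<noteq> 0" by (simp add: c_def coeff_def in_keys_iff lookup_minus)
    then show "i \<in> I" using coeff_outside[OF assms(2), of i] by auto
  qed
  moreover have "\<phi> b = \<phi> a + c"
  proof (rule poly_mapping_eqI)
    fix i
    show "Poly_Mapping.lookup (\<phi> b) i = Poly_Mapping.lookup (\<phi> a + c) i"
    proof (cases "i \<in> I")
      case True
      then show ?thesis using assms(3) by (simp add: c_def coeff_def lookup_add lookup_minus)
    next
      case False
      then show ?thesis using coeff_outside[OF assms(1) False] coeff_outside[OF assms(2) False]
        by (simp add: c_def coeff_def lookup_add lookup_minus)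
    qed
  qed
  moreover have "\<forall>a\<in>H. \<forall>b\<in>H. (\<exists>c. Poly_Mapping.keys c \<subseteq> I \<and> \<phi> b = \<phi> a + c) \<longrightarrow> (\<exists>c\<in>H. b = a + c)"
    using divisor_theory unfolding divisor_theory_def by (elim conjE)
  ultimately show ?thesis using assms(1,2) by blast
qed

lemma coeff_Min:
  assumes "i \<in> I"
  obtains S where "finite S" "S \<noteq> {}" "S \<subseteq> H"
    "\<And>j. Min ((\<lambda>a. coeff j a) ` S) = (if j = i then 1 else 0)"
proof -
  obtain T where T: "finite T" "T \<noteq> {}" "T \<subseteq> \<phi> ` H"
    "\<And>j. Poly_Mapping.lookup (Poly_Mapping.single i 1) j = Min ((\<lambda>f. Poly_Mapping.lookup f j) ` T)"
    using divisor_theory assms unfolding divisor_theory_def by meson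
  obtain S where S: "S \<subseteq> H" "finite S" "T = \<phi> ` S"
    using T(1,3) finite_subset_image by meson
  have "(\<lambda>a. coeff j a) ` S = (\<lambda>f. Poly_Mapping.lookup f j) ` T" for j
    by (auto simp: S(3) coeff_def)
  then have "Min ((\<lambda>a. coeff j a) ` S) = (if j = i then 1 else 0)" for j
    using T(4)[of j] by (cases "j = i") (simp_all add: lookup_single)
  with S T(2) show ?thesis using that by blast
qed

lemma exists_coeff_one:
  assumes "i \<in> I"
  shows "\<exists>h\<in>H. coeff i h = 1"
proof -
  obtain S where S: "finite S" "S \<noteq> {}" "S \<subseteq> H"
    "\<And>j. Min ((\<lambda>a. coeff j a) ` S) = (if j = i then 1 else 0)"
    using coeff_Min[OF assms] by blast
  have "Min ((\<lambda>a. coeff i a) ` S) \<in> (\<lambda>a. coeff i a) ` S"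
    using S by (intro Min_in) auto
  then obtain h where "h \<in> S" "coeff i h = 1" using S(4)[of i] by auto
  with S(3) show ?thesis by blast
qed

lemma exists_coeff_separating:
  assumes "i \<in> I" "j \<noteq> i"
  shows "\<exists>h\<in>H. coeff i h \<ge> 1 \<and> coeff j h = 0"
proof -
  obtain S where S: "finite S" "S \<noteq> {}" "S \<subseteq> H"
    "\<And>j. Min ((\<lambda>a. coeff j a) ` S) = (if j = i then 1 else 0)"
    using coeff_Min[OF assms(1)] by blast
  have "Min ((\<lambda>a. coeff j a) ` S) \<in> (\<lambda>a. coeff j a) ` S"
    using S by (intro Min_in) auto
  then obtain h where h: "h \<in> S" "coeff j h = 0" using S(4)[of j] assms(2) by auto
  have "Min ((\<lambda>a. coeff i a) ` S) \<le> coeff i h"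
    using S h by (intro Min_le) auto
  then have "coeff i h \<ge> 1" using S(4)[of i] by simp
  with h S(3) show ?thesis by blast
qed

lemma coeff_zero_if_dominated:
  assumes y: "y \<in> H" and a: "a \<in> H" and dom: "\<And>k. k \<in> K \<Longrightarrow> val k a > 0 \<Longrightarrow> val k y \<ge> 1"
    and "coeff i y = 0"
  shows "coeff i a = 0"
proof -
  obtain M w where w: "w \<in> H" "a + w = (\<lambda>z. M * y z)"
    using dominated_by_multiple[OF y a dom] by blast
  have "coeff i a + coeff i w = coeff i (\<lambda>z. M * y z)"
    using coeff_add[OF a w(1)] w(2) by simp
  also have "\<dots> = 0" using coeff_mult[OF y] \<open>coeff i y = 0\<close> by simp
  finally show ?thesis by simp
qed

lemma coeff_eq_val_mult_coeff_witness:
  assumes k: "k \<in> K" and "coeff i (avoiding k) = 0" and a: "a \<in> H"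
  shows "coeff i a = nat (val k a) * coeff i (witness k k)"
proof -
  obtain N w where w: "w \<in> H" "val k w = 0"
    "a + (\<lambda>z. N * avoiding k z) = (\<lambda>z. nat (val k a) * witness k k z) + w"
    using split_off_facet[OF k a] by blast
  have "coeff i w = 0"
  proof (rule coeff_zero_if_dominated[OF avoiding(1)[OF k] w(1) _ assms(2)])
    fix k' assume "k' \<in> K" "val k' w > 0"
    then show "val k' (avoiding k) \<ge> 1" using avoiding(3)[OF k] w(2) by (cases "k' = k") auto
  qed
  moreover have "coeff i a + N * coeff i (avoiding k) =
      nat (val k a) * coeff i (witness k k) + coeff i w"
    using arg_cong[OF w(3), of "coeff i"] a w(1) avoiding(1)[OF k] witness(1)[OF k k]
    by (simp add: coeff_add coeff_mult H_mult)
  ultimately show ?thesis using assms(2) by simp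
qed

lemma facet_is_coeff:
  assumes k: "k \<in> K"
  shows "\<exists>i\<in>I. \<forall>a\<in>H. coeff i a = nat (val k a)"
proof -
  define p where "p = witness k k"
  define y where "y = avoiding k"
  have p: "p \<in> H" "val k p = 1" using witness[OF k k] by (auto simp: p_def)
  have y: "y \<in> H" "val k y = 0" using avoiding[OF k] by (auto simp: y_def)
  \<comment> \<open>\<open>p\<close> divides no multiple of \<open>y\<close> (compare \<open>val k\<close>), and \<open>M\<close> bounds every coefficient of \<open>p\<close>,
    so some prime has coefficient 0 on \<open>y\<close> and positive on \<open>p\<close>.\<close>
  define M where "M = (\<Sum>i\<in>Poly_Mapping.keys (\<phi> p). coeff i p)"
  have My: "(\<lambda>z. M * y z) \<in> H" using y(1) by (rule H_mult)
  have "\<exists>i\<in>I. coeff i (\<lambda>z. M * y z) < coeff i p"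
  proof (rule ccontr)
    assume "\<not> ?thesis"
    then obtain c where c: "c \<in> H" "(\<lambda>z. M * y z) = p + c"
      using coeff_dvd_imp_dvd[OF p(1) My] by force
    have "val k (\<lambda>z. M * y z) = 0" using y(2) by (simp add: val_mult)
    moreover have "val k (p + c) \<ge> 1" using p(2) val_nonneg[OF c(1) k] by (simp add: val_add)
    ultimately show False using c(2) by simp
  qed
  then obtain i where i: "i \<in> I" "coeff i (\<lambda>z. M * y z) < coeff i p" by blast
  have "coeff i p \<le> M"
  proof (cases "i \<in> Poly_Mapping.keys (\<phi> p)")
    case True
    then show ?thesis unfolding M_def by (intro member_le_sum) auto
  next
    case False
    then show ?thesis by (simp add: coeff_def in_keys_iff)
  qed
  then have "coeff i y = 0" using i(2) coeff_mult[OF y(1), of i M] by (cases "coeff i y") auto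
  then have coeff_i: "\<forall>a\<in>H. coeff i a = nat (val k a) * coeff i p"
    using coeff_eq_val_mult_coeff_witness[OF k] by (simp add: p_def y_def)
  obtain h where "h \<in> H" "coeff i h = 1" using exists_coeff_one[OF i(1)] by blast
  then have "nat (val k h) * coeff i p = 1" using coeff_i by simp
  then have "coeff i p = 1" by simp
  then show ?thesis using coeff_i i(1) by auto
qed

lemma coeff_is_facet:
  assumes i: "i \<in> I"
  shows "\<exists>k\<in>K. \<forall>a\<in>H. coeff i a = nat (val k a)"
proof -
  obtain h where h: "h \<in> H" "coeff i h = 1" using exists_coeff_one[OF i] by blast
  have "\<exists>k\<in>K. \<forall>s\<in>H. coeff i s = 0 \<longrightarrow> val k s = 0"
  proof (rule ccontr)
    assume "\<not> ?thesis"
    then have "\<forall>k\<in>K. \<exists>s. s \<in> H \<and> coeff i s = 0 \<and> val k s \<noteq> 0" by blast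
    then obtain s where s: "\<And>k. k \<in> K \<Longrightarrow> s k \<in> H \<and> coeff i (s k) = 0 \<and> val k (s k) \<noteq> 0"
      by metis
    define t where "t = (\<lambda>z. \<Sum>k\<in>K. s k z)"
    have t: "t \<in> H" unfolding t_def using s by (intro H_sum) auto
    have "coeff i t = 0" unfolding t_def using s by (simp add: coeff_sum)
    moreover have "val k t \<ge> 1" if k: "k \<in> K" for k
    proof -
      have "val k t \<ge> val k (s k)"
        unfolding t_def using finite_K k s by (intro val_sum_ge) auto
      moreover have "val k (s k) \<ge> 0" using s[OF k] val_nonneg k by blast
      ultimately show ?thesis using s[OF k] by linarith
    qed
    ultimately have "coeff i h = 0" using coeff_zero_if_dominated[OF t h(1)] by blast
    with h show False by simp
  qed
  then obtain k where k: "k \<in> K" "\<And>s. s \<in> H \<Longrightarrow> coeff i s = 0 \<Longrightarrow> val k s = 0" by blast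
  obtain j where j: "j \<in> I" "\<forall>a\<in>H. coeff j a = nat (val k a)"
    using facet_is_coeff[OF k(1)] by blast
  have "j = i"
  proof (rule ccontr)
    assume "j \<noteq> i"
    then obtain h where "h \<in> H" "coeff j h \<ge> 1" "coeff i h = 0"
      using exists_coeff_separating[of j i] j(1) by auto
    then show False using j(2) k(2) by simp
  qed
  with j k(1) show ?thesis by blast
qed

theorem divisor_theory_eq_facet_divisor:
  "\<exists>\<sigma>. bij_betw \<sigma> I K \<and> (\<forall>a\<in>H. \<phi> a = facet_divisor I \<sigma> a)"
proof -
  define \<sigma> where "\<sigma> i = (SOME k. k \<in> K \<and> (\<forall>a\<in>H. coeff i a = nat (val k a)))" for i
  have \<sigma>: "\<sigma> i \<in> K" "\<forall>a\<in>H. coeff i a = nat (val (\<sigma> i) a)" if "i \<in> I" for i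
    using someI_ex[OF coeff_is_facet[OF that, unfolded Bex_def]] unfolding \<sigma>_def by blast+
  have "inj_on \<sigma> I"
  proof (rule inj_onI, rule ccontr)
    fix i j assume ij: "i \<in> I" "j \<in> I" "\<sigma> i = \<sigma> j" "i \<noteq> j"
    then obtain h where "h \<in> H" "coeff i h \<ge> 1" "coeff j h = 0"
      using exists_coeff_separating[of i j] by auto
    then show False using \<sigma>(2)[OF ij(1)] \<sigma>(2)[OF ij(2)] ij(3) by simp
  qed
  moreover have "\<sigma> ` I = K"
  proof
    show "\<sigma> ` I \<subseteq> K" using \<sigma>(1) by blast
    show "K \<subseteq> \<sigma> ` I"
    proof
      fix k assume k: "k \<in> K"
      then obtain i where i: "i \<in> I" "\<forall>a\<in>H. coeff i a = nat (val k a)"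
        using facet_is_coeff by blast
      then have "\<sigma> i = k" using val_determines_facet[OF \<sigma>(1)[OF i(1)] k] \<sigma>(2)[OF i(1)] by simp
      with i(1) show "k \<in> \<sigma> ` I" by blast
    qed
  qed
  ultimately have bij: "bij_betw \<sigma> I K" by (simp add: bij_betw_def)
  then have "finite I" using finite_K bij_betw_finite by blast
  then have "\<phi> a = facet_divisor I \<sigma> a" if "a \<in> H" for a
    using that \<sigma>(2) coeff_outside
    by (intro poly_mapping_eqI) (simp add: lookup_facet_divisor coeff_def)
  with bij show ?thesis by blast
qed

corollary divisor_class_group_eq_Mod_facet_map:
  "\<exists>\<sigma>. bij_betw \<sigma> I K \<and>
    divisor_class_group H I \<phi> = free_Abelian_group I Mod (facet_map I \<sigma> ` lattice)"
proof -
  obtain \<sigma> where \<sigma>: "bij_betw \<sigma> I K" "\<And>a. a \<in> H \<Longrightarrow> \<phi> a = facet_divisor I \<sigma> a"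
    using divisor_theory_eq_facet_divisor by blast
  then have "(\<lambda>a. Poly_Mapping.map int (\<phi> a)) ` H =
      (\<lambda>a. Poly_Mapping.map int (facet_divisor I \<sigma> a)) ` H"
    by simp
  then show ?thesis
    using \<sigma>(1) generate_facet_divisor[OF \<sigma>(1)] by (auto simp: divisor_class_group_def)
qed

end

section \<open>Agglomerations\<close>

datatype ('v, 'e) facet = Edge 'e | Incidence 'v 'e | Isolated 'v

fun facet_form :: "('v, 'e) facet \<Rightarrow> ('v + 'e \<Rightarrow> int) \<Rightarrow> int" where
  "facet_form (Edge e) x = x (Inr e)"
| "facet_form (Incidence v e) x = x (Inl v) - x (Inr e)"
| "facet_form (Isolated v) x = x (Inl v)"

definition graph_facets :: "'v set \<Rightarrow> 'e set \<Rightarrow> ('e \<Rightarrow> 'v set) \<Rightarrow> ('v, 'e) facet set" where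
  "graph_facets V E r =
    Edge ` E \<union> {Incidence v e | v e. e \<in> E \<and> v \<in> r e} \<union> Isolated ` isolated_vertices V E r"

definition graph_support :: "'v set \<Rightarrow> 'e set \<Rightarrow> ('v + 'e) set" where
  "graph_support V E = Inl ` V \<union> Inr ` E"

locale finite_multigraph =
  fixes V :: "'v set" and E :: "'e set" and r :: "'e \<Rightarrow> 'v set"
  assumes is_graph: "is_graph V E r"
begin

lemma finite_V: "finite V" and finite_E: "finite E"
  and ends_subset: "e \<in> E \<Longrightarrow> r e \<subseteq> V" and card_ends: "e \<in> E \<Longrightarrow> card (r e) = 2"
  using is_graph unfolding is_graph_def by auto

lemma isolated_iff: "v \<in> isolated_vertices V E r \<longleftrightarrow> v \<in> V \<and> (\<forall>e\<in>E. v \<notin> r e)"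
  unfolding isolated_vertices_def by auto

lemma mem_graph_facets [simp]:
  "Edge e \<in> graph_facets V E r \<longleftrightarrow> e \<in> E"
  "Incidence v e \<in> graph_facets V E r \<longleftrightarrow> e \<in> E \<and> v \<in> r e"
  "Isolated v \<in> graph_facets V E r \<longleftrightarrow> v \<in> isolated_vertices V E r"
  unfolding graph_facets_def by auto

lemma incidences_eq: "{Incidence v e | v e. e \<in> E \<and> v \<in> r e} = (\<Union>e\<in>E. (\<lambda>v. Incidence v e) ` r e)"
  by auto

lemma finite_ends: "e \<in> E \<Longrightarrow> finite (r e)"
  using card_ends by (metis card.infinite zero_neq_numeral)

lemma finite_graph_facets: "finite (graph_facets V E r)"
proof -
  have "finite (isolated_vertices V E r)"
    using finite_V by (rule finite_subset[rotated]) (auto simp: isolated_iff)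
  then show ?thesis
    unfolding graph_facets_def incidences_eq using finite_E finite_ends by auto
qed

lemma agglomerations_eq:
  "agglomerations V E r = {a. (\<forall>z. z \<notin> graph_support V E \<longrightarrow> a z = 0) \<and>
     (\<forall>k\<in>graph_facets V E r. facet_form k (\<lambda>z. int (a z)) \<ge> 0)}"
proof (intro Set.set_eqI iffI CollectI conjI allI ballI impI)
  fix a assume a: "a \<in> agglomerations V E r"
  show "a z = 0" if "z \<notin> graph_support V E" for z
    using a that unfolding agglomerations_def graph_support_def by (cases z) auto
  show "facet_form k (\<lambda>z. int (a z)) \<ge> 0" if "k \<in> graph_facets V E r" for k
    using a that unfolding agglomerations_def by (cases k) auto
next
  fix a assume a: "a \<in> {a. (\<forall>z. z \<notin> graph_support V E \<longrightarrow> a z = 0) \<and>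
     (\<forall>k\<in>graph_facets V E r. facet_form k (\<lambda>z. int (a z)) \<ge> 0)}"
  have "a (Inr e) \<le> a (Inl v)" if "e \<in> E" "v \<in> r e" for e v
  proof -
    have "Incidence v e \<in> graph_facets V E r" using that by simp
    then show ?thesis using a by fastforce
  qed
  moreover have "a (Inl v) = 0" if "v \<notin> V" for v
    using a that by (auto simp: graph_support_def)
  moreover have "a (Inr e) = 0" if "e \<notin> E" for e
    using a that by (auto simp: graph_support_def)
  ultimately show "a \<in> agglomerations V E r"
    unfolding agglomerations_def by blast
qed

lemma nonneg_if_facet_forms_nonneg:
  assumes "\<forall>z. z \<notin> graph_support V E \<longrightarrow> x z = 0"
    and forms: "\<forall>k\<in>graph_facets V E r. facet_form k x \<ge> 0"
  shows "x z \<ge> 0"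
proof (cases z)
  case (Inl v)
  consider "v \<notin> V" | "v \<in> isolated_vertices V E r" | e where "e \<in> E" "v \<in> r e"
    by (auto simp: isolated_iff)
  then show ?thesis
  proof cases
    case 1
    then show ?thesis using assms(1) Inl by (auto simp: graph_support_def)
  next
    case 2
    then show ?thesis using forms[rule_format, of "Isolated v"] Inl by simp
  next
    case 3
    then show ?thesis
      using forms[rule_format, of "Incidence v e"] forms[rule_format, of "Edge e"] Inl by simp
  qed
next
  case (Inr e)
  then show ?thesis
    using assms(1) forms[rule_format, of "Edge e"] by (cases "e \<in> E") (auto simp: graph_support_def)
qed

lemma indicator_in_agglomerations:
  assumes "C \<subseteq> graph_support V E" "\<And>e v. e \<in> E \<Longrightarrow> v \<in> r e \<Longrightarrow> Inr e \<in> C \<Longrightarrow> Inl v \<in> C"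
  shows "(\<lambda>z. of_bool (z \<in> C)) \<in> agglomerations V E r"
  using assms unfolding agglomerations_def graph_support_def by auto

lemma indicators_in_agglomerations:
  "(\<lambda>z. of_bool (z \<in> graph_support V E)) \<in> agglomerations V E r"
  "(\<lambda>z. of_bool (z \<in> graph_support V E - {Inr e})) \<in> agglomerations V E r"
  "e \<in> E \<Longrightarrow> (\<lambda>z. of_bool (z \<in> insert (Inr e) (Inl ` r e))) \<in> agglomerations V E r"
  "v \<in> V \<Longrightarrow> (\<lambda>z. of_bool (z \<in> {Inl v})) \<in> agglomerations V E r"
  by (rule indicator_in_agglomerations; use ends_subset in \<open>auto simp: graph_support_def\<close>)+

lemma facet_witness_graph:
  assumes k: "k \<in> graph_facets V E r" and k': "k' \<in> graph_facets V E r"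
  shows "\<exists>s\<in>agglomerations V E r.
    facet_form k (\<lambda>z. int (s z)) = 1 \<and> (k' \<noteq> k \<longrightarrow> facet_form k' (\<lambda>z. int (s z)) = 0)"
proof (cases k)
  case (Edge e)
  then have e: "e \<in> E" using k by simp
  show ?thesis
  proof (cases "\<exists>v' e'. k' = Incidence v' e' \<and> e' \<noteq> e")
    case True
    then obtain v' e' where "k' = Incidence v' e'" "e' \<noteq> e" by blast
    moreover have "v' \<in> V" "e' \<in> E" using calculation k' ends_subset by auto
    ultimately show ?thesis using indicators_in_agglomerations(1) e Edge
      by (auto simp: graph_support_def intro!: bexI[of _ "\<lambda>z. of_bool (z \<in> graph_support V E)"])
  next
    case False
    then show ?thesis using indicators_in_agglomerations(3)[OF e] k' Edge e
      by (cases k')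
        (auto simp: isolated_iff intro!: bexI[of _ "\<lambda>z. of_bool (z \<in> insert (Inr e) (Inl ` r e))"])
  qed
next
  case (Incidence v e)
  then have v: "v \<in> V" "v \<notin> isolated_vertices V E r"
    using k ends_subset by (auto simp: isolated_iff)
  show ?thesis
  proof (cases "\<exists>e'. k' = Incidence v e' \<and> e' \<noteq> e")
    case True
    then show ?thesis using indicators_in_agglomerations(2) k' Incidence v
      by (auto simp: graph_support_def
          intro!: bexI[of _ "\<lambda>z. of_bool (z \<in> graph_support V E - {Inr e})"])
  next
    case False
    then show ?thesis using indicators_in_agglomerations(4)[OF v(1)] k' Incidence v
      by (cases k') (auto intro!: bexI[of _ "\<lambda>z. of_bool (z \<in> {Inl v})"])
  qed
next
  case (Isolated v)
  then have v: "v \<in> V" "\<forall>e\<in>E. v \<notin> r e" using k by (auto simp: isolated_iff)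
  then show ?thesis using indicators_in_agglomerations(4)[OF v(1)] k' Isolated
    by (cases k') (auto intro!: bexI[of _ "\<lambda>z. of_bool (z \<in> {Inl v})"])
qed

sublocale polyhedral_monoid
  "graph_support V E" "graph_facets V E r" facet_form "agglomerations V E r"
proof
  show "finite (graph_facets V E r)" by (rule finite_graph_facets)
  show "facet_form k (\<lambda>z. x z + y z) = facet_form k x + facet_form k y" for k x y
    by (cases k) auto
  show "agglomerations V E r = {a. (\<forall>z. z \<notin> graph_support V E \<longrightarrow> a z = 0) \<and>
     (\<forall>k\<in>graph_facets V E r. facet_form k (\<lambda>z. int (a z)) \<ge> 0)}"
    by (rule agglomerations_eq)
qed (use nonneg_if_facet_forms_nonneg facet_witness_graph in blast)+

definition incident_edge :: "'v \<Rightarrow> 'e" where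
  "incident_edge v = (SOME e. e \<in> E \<and> v \<in> r e)"

lemma incident_edge:
  assumes "v \<in> V" "v \<notin> isolated_vertices V E r"
  shows "incident_edge v \<in> E" "v \<in> r (incident_edge v)"
proof -
  have "\<exists>e. e \<in> E \<and> v \<in> r e" using assms by (auto simp: isolated_iff)
  then show "incident_edge v \<in> E" "v \<in> r (incident_edge v)"
    unfolding incident_edge_def by (metis (mono_tags, lifting) someI_ex)+
qed

definition coordinate_facets :: "('v, 'e) facet set" where
  "coordinate_facets = Edge ` E \<union> Isolated ` isolated_vertices V E r \<union>
     (\<lambda>v. Incidence v (incident_edge v)) ` (V - isolated_vertices V E r)"

definition reconstruct :: "(('v, 'e) facet \<Rightarrow> int) \<Rightarrow> 'v + 'e \<Rightarrow> int" where
  "reconstruct c z = (case z of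
      Inl v \<Rightarrow> if v \<notin> V then 0 else if v \<in> isolated_vertices V E r then c (Isolated v)
        else c (Incidence v (incident_edge v)) + c (Edge (incident_edge v))
    | Inr e \<Rightarrow> if e \<in> E then c (Edge e) else 0)"

lemma reconstruct_cong:
  "(\<And>k. k \<in> coordinate_facets \<Longrightarrow> c k = c' k) \<Longrightarrow> reconstruct c = reconstruct c'"
  by (auto simp: fun_eq_iff reconstruct_def coordinate_facets_def incident_edge split: sum.split)

lemma reconstruct_add: "reconstruct (\<lambda>k. c k + c' k) = reconstruct c + reconstruct c'"
  by (auto simp: fun_eq_iff reconstruct_def split: sum.split)

lemma reconstruct_in_lattice: "reconstruct c \<in> lattice"
  unfolding lattice_def by (auto simp: reconstruct_def graph_support_def split: sum.split)

lemma reconstruct_facet_forms: "x \<in> lattice \<Longrightarrow> reconstruct (\<lambda>k. facet_form k x) = x"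
  unfolding lattice_def
  by (auto simp: fun_eq_iff reconstruct_def graph_support_def split: sum.split)

lemma facet_form_reconstruct:
  "k \<in> coordinate_facets \<Longrightarrow> facet_form k (reconstruct c) = c k"
  by (auto simp: coordinate_facets_def reconstruct_def incident_edge isolated_iff)

lemma coordinate_facets_subset: "coordinate_facets \<subseteq> graph_facets V E r"
  by (auto simp: coordinate_facets_def incident_edge)

lemma card_graph_facets_diff_coordinate_facets:
  "card (graph_facets V E r - coordinate_facets) =
    nat (2 * int (card E) - int (card V) + int (card (isolated_vertices V E r)))"
proof -
  let ?iso = "isolated_vertices V E r"
  define Inc where "Inc = {Incidence v e | v e. e \<in> E \<and> v \<in> r e}"
  define Ch where "Ch = (\<lambda>v. Incidence v (incident_edge v)) ` (V - ?iso)"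
  have diff_eq: "graph_facets V E r - coordinate_facets = Inc - Ch"
    by (auto simp: graph_facets_def coordinate_facets_def Inc_def Ch_def)
  have fin_Inc: "finite Inc" unfolding Inc_def incidences_eq using finite_E finite_ends by auto
  have card_Inc: "card Inc = 2 * card E"
  proof -
    have "card Inc = (\<Sum>e\<in>E. card ((\<lambda>v. Incidence v e) ` r e))"
      unfolding Inc_def incidences_eq using finite_E finite_ends by (intro card_UN_disjoint) auto
    also have "\<dots> = (\<Sum>e\<in>E. 2)"
      by (intro sum.cong refl) (simp add: card_image inj_on_def card_ends)
    finally show ?thesis by simp
  qed
  have iso_subset: "?iso \<subseteq> V" by (auto simp: isolated_iff)
  have card_Ch: "card Ch = card V - card ?iso"
  proof -
    have "card Ch = card (V - ?iso)" unfolding Ch_def by (rule card_image) (auto simp: inj_on_def)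
    also have "\<dots> = card V - card ?iso"
      using iso_subset finite_V by (intro card_Diff_subset) (auto intro: finite_subset)
    finally show ?thesis .
  qed
  have Ch_subset: "Ch \<subseteq> Inc" by (auto simp: Ch_def Inc_def incident_edge)
  have "card (Inc - Ch) = card Inc - card Ch"
    using Ch_subset fin_Inc by (intro card_Diff_subset) (auto intro: finite_subset)
  moreover have "card ?iso \<le> card V" using iso_subset finite_V by (rule card_mono[rotated])
  moreover have "card Ch \<le> card Inc" using Ch_subset fin_Inc by (rule card_mono[rotated])
  ultimately show ?thesis using diff_eq card_Inc card_Ch by simp
qed

lemma Mod_facet_map_iso:
  assumes \<sigma>: "bij_betw \<sigma> I (graph_facets V E r)"
  shows "free_Abelian_group I Mod (facet_map I \<sigma> ` lattice) \<cong>
    free_Abelian_group {i \<in> I. \<sigma> i \<notin> coordinate_facets}"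
proof -
  have finI: "finite I" using \<sigma> finite_graph_facets bij_betw_finite by blast
  define \<tau> where "\<tau> = inv_into I \<sigma>"
  have \<tau>: "\<tau> k \<in> I" "\<sigma> (\<tau> k) = k" if "k \<in> graph_facets V E r" for k
    using \<sigma> that unfolding \<tau>_def by (auto simp: bij_betw_def inv_into_into f_inv_into_f)
  have \<tau>\<sigma>: "\<tau> (\<sigma> i) = i" if "i \<in> I" for i
    using \<sigma> that unfolding \<tau>_def by (simp add: bij_betw_def inv_into_f_f)
  define S where "S = {i \<in> I. \<sigma> i \<in> coordinate_facets}"
  define \<rho> where "\<rho> y = reconstruct (\<lambda>k. Poly_Mapping.lookup y (\<tau> k))" for y
  have "{i \<in> I. \<sigma> i \<notin> coordinate_facets} = I - S" by (auto simp: S_def)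
  moreover have "free_Abelian_group I Mod (facet_map I \<sigma> ` lattice) \<cong> free_Abelian_group (I - S)"
  proof (rule free_Abelian_group_Mod_image_iso[where \<rho> = \<rho>])
    show "facet_map I \<sigma> (x + x') = facet_map I \<sigma> x + facet_map I \<sigma> x'" for x x'
      using facet_map_add[OF finI] by (simp add: plus_fun_def)
    show "\<rho> (y + y') = \<rho> y + \<rho> y'" for y y'
      by (simp add: \<rho>_def lookup_add reconstruct_add)
    show "\<rho> (facet_map I \<sigma> x) = x" if "x \<in> lattice" for x
    proof -
      have "\<rho> (facet_map I \<sigma> x) = reconstruct (\<lambda>k. facet_form k x)"
        unfolding \<rho>_def using coordinate_facets_subset finI
        by (intro reconstruct_cong) (auto simp: lookup_facet_map \<tau>)
      with that show ?thesis by (simp add: reconstruct_facet_forms)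
    qed
    show "Poly_Mapping.lookup (facet_map I \<sigma> (\<rho> y)) i = Poly_Mapping.lookup y i" if "i \<in> S" for y i
      using that finI by (simp add: S_def lookup_facet_map \<rho>_def facet_form_reconstruct \<tau>\<sigma>)
    show "\<rho> y = 0" if "\<And>i. i \<in> S \<Longrightarrow> Poly_Mapping.lookup y i = 0" for y
    proof -
      have "\<rho> y = reconstruct (\<lambda>k. 0)"
        unfolding \<rho>_def using that coordinate_facets_subset
        by (intro reconstruct_cong) (auto simp: S_def \<tau>)
      also have "\<dots> = 0" by (simp add: fun_eq_iff reconstruct_def split: sum.split)
      finally show ?thesis .
    qed
  qed (use finI facet_map_keys reconstruct_in_lattice \<rho>_def in auto)
  ultimately show ?thesis by simp
qed

lemma exists_divisor_theory: "\<exists>(I :: nat set) \<phi>. divisor_theory (agglomerations V E r) I \<phi>"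
proof -
  obtain \<sigma> :: "nat \<Rightarrow> ('v, 'e) facet"
    where "bij_betw \<sigma> {..<card (graph_facets V E r)} (graph_facets V E r)"
    using ex_bij_betw_nat_finite[OF finite_graph_facets] by (auto simp: atLeast0LessThan)
  then show ?thesis using divisor_theory_facet_divisor by blast
qed

lemma divisor_class_group_iso:
  assumes "divisor_theory (agglomerations V E r) I \<phi>"
  shows "divisor_class_group (agglomerations V E r) I \<phi> \<cong>
    free_Abelian_group {..< card (graph_facets V E r - coordinate_facets)}"
proof -
  interpret polyhedral_divisor_theory
    "graph_support V E" "graph_facets V E r" facet_form "agglomerations V E r" I \<phi>
    using polyhedral_monoid_axioms assms
    by (simp add: polyhedral_divisor_theory_def polyhedral_divisor_theory_axioms_def)
  obtain \<sigma> where \<sigma>: "bij_betw \<sigma> I (graph_facets V E r)"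
    "divisor_class_group (agglomerations V E r) I \<phi> =
      free_Abelian_group I Mod (facet_map I \<sigma> ` lattice)"
    using divisor_class_group_eq_Mod_facet_map by blast
  then have "divisor_class_group (agglomerations V E r) I \<phi> \<cong>
      free_Abelian_group {i \<in> I. \<sigma> i \<notin> coordinate_facets}"
    using Mod_facet_map_iso by simp
  also have "\<dots> \<cong> free_Abelian_group {..< card (graph_facets V E r - coordinate_facets)}"
  proof -
    have bij: "bij_betw \<sigma> {i \<in> I. \<sigma> i \<notin> coordinate_facets} (graph_facets V E r - coordinate_facets)"
      using \<sigma>(1) unfolding bij_betw_def inj_on_def by auto
    moreover have "finite {i \<in> I. \<sigma> i \<notin> coordinate_facets}"
      using bij finite_graph_facets bij_betw_finite by blast
    ultimately show ?thesis
      by (simp add: isomorphic_free_Abelian_groups eqpoll_iff_card bij_betw_same_card)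
  qed
  finally show ?thesis .
qed

end

theorem corollary4p7:
  fixes V :: "'v set" and E :: "'e set" and r :: "'e \<Rightarrow> 'v set"
  assumes "is_graph V E r"
  shows "(\<exists>(I :: nat set) \<phi>. divisor_theory (agglomerations V E r) I \<phi>) \<and>
         (\<forall>(I :: 'i set) \<phi>. divisor_theory (agglomerations V E r) I \<phi> \<longrightarrow>
            divisor_class_group (agglomerations V E r) I \<phi> \<cong>
              free_Abelian_group
                {..< nat (2 * int (card E) - int (card V) + int (card (isolated_vertices V E r)))})"
proof -
  interpret finite_multigraph V E r using assms by (rule finite_multigraph.intro)
  show ?thesis
  proof (intro conjI allI impI)
    show "\<exists>(I :: nat set) \<phi>. divisor_theory (agglomerations V E r) I \<phi>"
      by (rule exists_divisor_theory)
    fix I :: "'i set" and \<phi>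
    assume "divisor_theory (agglomerations V E r) I \<phi>"
    from divisor_class_group_iso[OF this]
    show "divisor_class_group (agglomerations V E r) I \<phi> \<cong> free_Abelian_group
        {..< nat (2 * int (card E) - int (card V) + int (card (isolated_vertices V E r)))}"
      by (simp only: card_graph_facets_diff_coordinate_facets)
  qed
qed

end
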